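(* Let $k$ be any field and let $f_1,\ldots,f_r$ be homogeneous polynomials (forms) in $k[x,y]$ of degrees $d_1\ge d_2\ge\cdots\ge d_r$ such that the ideal $(f_1,\ldots,f_r)$ is minimally generated by $f_1,\ldots,f_r$. Then, coefficientwise, $$\big(k[x,y]/(f_1,\ldots,f_r)\big)(z)\;\le\;\frac{1+z+\cdots+z^{d_r-1}-\big(z^{d_{r-1}}+z^{d_{r-2}}+\cdots+z^{d_1}\big)}{1-z}.$$
   Context: For a graded $k$-algebra $R=\bigoplus_{i\ge0}R_i$ with finite-dimensional graded pieces, its Hilbert series is $R(z)=\sum_{i\ge0}\dim_k R_i\,z^i$. Here $x,y$ have degree $1$. For power series $A(z)=\sum a_iz^i$, $B(z)=\sum b_iz^i$, $A\le B$ coefficientwise means $a_i\le b_i$ for all $i$. *)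

theory Defs
  imports Main "HOL-Computational_Algebra.Polynomial" "HOL-Computational_Algebra.Formal_Power_Series"
begin

text \<open>k[x,y] is represented as 'a poly poly: the coefficient of x^a y^b in p is
  coeff (coeff p a) b (outer variable x, inner variable y).\<close>

definition homogeneous :: "'a::zero poly poly \<Rightarrow> nat \<Rightarrow> bool" where
  "homogeneous p d \<longleftrightarrow> (\<forall>a b. coeff (coeff p a) b \<noteq> 0 \<longrightarrow> a + b = d)"

definition gen_ideal :: "(nat \<Rightarrow> 'a::comm_ring_1) \<Rightarrow> nat set \<Rightarrow> 'a set" where
  "gen_ideal f A = {p. \<exists>g. p = (\<Sum>i\<in>A. g i * f i)}"

definition kscale :: "'a::field \<Rightarrow> 'a poly poly \<Rightarrow> 'a poly poly" where
  "kscale c p = smult [:c:] p"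

text \<open>Dimension of the degree-i component of k[x,y]/I for a homogeneous ideal I:
  dim_k R_i - dim_k I_i, where dim_k R_i = i+1.\<close>
definition quot_hilb_fun :: "'a::field poly poly set \<Rightarrow> nat \<Rightarrow> nat" where
  "quot_hilb_fun I i = (i + 1) - vector_space.dim kscale {p \<in> I. homogeneous p i}"

definition quot_hilb_series :: "'a::field poly poly set \<Rightarrow> rat fps" where
  "quot_hilb_series I = Abs_fps (\<lambda>i. of_nat (quot_hilb_fun I i))"

end

theory Submission
  imports Defs
begin

text \<open>Let \<open>D = d\<^sub>r\<close> be the least degree. For \<open>n \<ge> D\<close> one builds an independent subset
  of the degree-\<open>n\<close> part \<open>I\<^sub>n\<close> of \<open>I = (f\<^sub>1,\<dots>,f\<^sub>r)\<close> with
  \<open>n - D + #{j. d\<^sub>j \<le> n}\<close> elements. In degree \<open>D\<close> take the generators of degree \<open>D\<close>. Going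
  from \<open>n\<close> to \<open>n + 1\<close>, multiply the set by \<open>x\<close> and add \<open>y v\<close> for an element \<open>v\<close> of least
  \<open>x\<close>-order, which gains one dimension, then add the generators of degree \<open>n + 1\<close>: all previous
  elements lie in the ideal of the generators of lower degree, so by minimality each new
  generator is independent of them. Hence \<open>dim (R/I)\<^sub>n \<le> D - #{j \<le> r - 1. d\<^sub>j \<le> n}\<close>,
  which is the \<open>n\<close>-th coefficient of the right-hand side.\<close>

lemma kscale_vector_space: "vector_space (kscale :: 'a::field \<Rightarrow> 'a poly poly \<Rightarrow> 'a poly poly)"
  unfolding vector_space_def kscale_def
  by (auto simp: smult_add_right smult_add_left[symmetric] mult.commute one_pCons[symmetric])

interpretation kv: vector_space "kscale :: 'a::field \<Rightarrow> 'a poly poly \<Rightarrow> 'a poly poly"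
  by (rule kscale_vector_space)

interpretation kv_pair: vector_space_pair
  "kscale :: 'a::field \<Rightarrow> 'a poly poly \<Rightarrow> 'a poly poly"
  "kscale :: 'a::field \<Rightarrow> 'a poly poly \<Rightarrow> 'a poly poly"
  by unfold_locales

abbreviation degree_part :: "'a::zero poly poly set \<Rightarrow> nat \<Rightarrow> 'a poly poly set" where
  "degree_part I n \<equiv> {p \<in> I. homogeneous p n}"

lemma poly_poly_eqI: "(\<And>a b. coeff (coeff p a) b = coeff (coeff q a) b) \<Longrightarrow> p = q"
  by (simp add: poly_eq_iff)

definition hom_part :: "nat \<Rightarrow> 'a::comm_ring_1 poly poly \<Rightarrow> 'a poly poly" where
  "hom_part k p = (\<Sum>a\<le>k. monom (monom (coeff (coeff p a) (k - a)) (k - a)) a)"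

lemma coeff_hom_part:
  "coeff (coeff (hom_part k p) a) b = (if a + b = k then coeff (coeff p a) b else 0)"
  unfolding hom_part_def by (auto simp: coeff_sum coeff_monom)

lemma homogeneous_iff_hom_part: "homogeneous p k \<longleftrightarrow> hom_part k p = p"
  unfolding homogeneous_def by (auto simp: poly_eq_iff coeff_hom_part split: if_splits)

lemma homogeneous_hom_part: "homogeneous (hom_part k p) k"
  unfolding homogeneous_def by (simp add: coeff_hom_part)

lemma hom_part_sum: "hom_part k (\<Sum>i\<in>A. g i) = (\<Sum>i\<in>A. hom_part k (g i))"
  by (rule poly_poly_eqI) (simp add: coeff_hom_part coeff_sum)

lemma coeff_coeff_mult:
  "coeff (coeff (g * f) a) b =
     (\<Sum>i\<le>a. \<Sum>j\<le>b. coeff (coeff g i) j * coeff (coeff f (a - i)) (b - j))"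
  by (simp add: coeff_mult coeff_sum)

lemma coeff_coeff_mult_homogeneous:
  assumes "homogeneous f d"
  shows "coeff (coeff (g * f) a) b =
     (\<Sum>i\<le>a. \<Sum>j\<le>b. if i + j + d = a + b
        then coeff (coeff g i) j * coeff (coeff f (a - i)) (b - j) else 0)"
  unfolding coeff_coeff_mult
proof (intro sum.cong refl)
  fix i j assume "i \<in> {..a}" "j \<in> {..b}"
  moreover have "(a - i) + (b - j) = d" if "coeff (coeff f (a - i)) (b - j) \<noteq> 0"
    using assms that unfolding homogeneous_def by blast
  ultimately show "coeff (coeff g i) j * coeff (coeff f (a - i)) (b - j) =
      (if i + j + d = a + b then coeff (coeff g i) j * coeff (coeff f (a - i)) (b - j) else 0)"
    by (cases "coeff (coeff f (a - i)) (b - j) = 0") auto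
qed

lemma homogeneous_mult:
  assumes "homogeneous g e" "homogeneous f d"
  shows "homogeneous (g * f) (e + d)"
  unfolding homogeneous_def
proof (intro allI impI)
  fix a b assume "coeff (coeff (g * f) a) b \<noteq> 0"
  then obtain i j where "i + j + d = a + b" "coeff (coeff g i) j \<noteq> 0"
    unfolding coeff_coeff_mult_homogeneous[OF assms(2)]
    by (fastforce elim!: sum.not_neutral_contains_not_neutral split: if_splits)
  with assms(1) show "a + b = e + d" unfolding homogeneous_def by fastforce
qed

lemma hom_part_mult_homogeneous:
  assumes f: "homogeneous f d"
  shows "hom_part k (g * f) = (if d \<le> k then hom_part (k - d) g * f else 0)"
proof (cases "d \<le> k")
  case True
  have "coeff (coeff (hom_part k (g * f)) a) b = coeff (coeff (hom_part (k - d) g * f) a) b" for a b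
  proof (cases "a + b = k")
    case True
    with \<open>d \<le> k\<close> show ?thesis
      by (simp add: coeff_hom_part coeff_coeff_mult_homogeneous[OF f])
        (intro sum.cong refl, auto simp: coeff_hom_part)
  next
    case False
    have "homogeneous (hom_part (k - d) g * f) k"
      using homogeneous_mult[OF homogeneous_hom_part[of "k - d" g] f] \<open>d \<le> k\<close> by simp
    with False show ?thesis unfolding homogeneous_def by (auto simp: coeff_hom_part)
  qed
  with True show ?thesis by (simp add: poly_poly_eqI)
next
  case False
  then show ?thesis
    by (intro poly_poly_eqI) (simp add: coeff_hom_part coeff_coeff_mult_homogeneous[OF f])
qed

lemma gen_ideal_memI: "p = (\<Sum>i\<in>A. g i * f i) \<Longrightarrow> p \<in> gen_ideal f A"
  unfolding gen_ideal_def by blast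

lemma gen_ideal_zero: "0 \<in> gen_ideal f A"
  unfolding gen_ideal_def by (auto intro!: exI[of _ "\<lambda>i. 0"])

lemma gen_ideal_add:
  assumes "p \<in> gen_ideal f A" "q \<in> gen_ideal f A"
  shows "p + q \<in> gen_ideal f A"
proof -
  obtain g h where "p = (\<Sum>i\<in>A. g i * f i)" "q = (\<Sum>i\<in>A. h i * f i)"
    using assms unfolding gen_ideal_def by blast
  then have "p + q = (\<Sum>i\<in>A. (g i + h i) * f i)" by (simp add: sum.distrib distrib_right)
  then show ?thesis by (rule gen_ideal_memI)
qed

lemma gen_ideal_mult_left:
  assumes "p \<in> gen_ideal f A" shows "q * p \<in> gen_ideal f A"
proof -
  obtain g where "p = (\<Sum>i\<in>A. g i * f i)" using assms unfolding gen_ideal_def by blast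
  then have "q * p = (\<Sum>i\<in>A. (q * g i) * f i)" by (simp add: sum_distrib_left mult.assoc)
  then show ?thesis by (rule gen_ideal_memI)
qed

lemma gen_ideal_generator:
  assumes "finite A" "j \<in> A" shows "f j \<in> gen_ideal f A"
proof -
  have "f j = (\<Sum>i\<in>A. (if i = j then 1 else 0) * f i)"
    using assms by (simp add: if_distrib[of "\<lambda>x. x * _"] cong: if_cong)
  then show ?thesis by (rule gen_ideal_memI)
qed

lemma gen_ideal_mono:
  assumes "finite A" "B \<subseteq> A" shows "gen_ideal f B \<subseteq> gen_ideal f A"
proof
  fix p assume "p \<in> gen_ideal f B"
  then obtain g where "p = (\<Sum>i\<in>B. g i * f i)" unfolding gen_ideal_def by blast
  also have "\<dots> = (\<Sum>i\<in>A. (if i \<in> B then g i else 0) * f i)"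
    using assms by (simp add: if_distrib[of "\<lambda>x. x * _"] sum.inter_restrict[symmetric]
        Int_absorb1 cong: if_cong)
  finally show "p \<in> gen_ideal f A" by (rule gen_ideal_memI)
qed

lemma gen_ideal_subspace: "kv.subspace (gen_ideal f A)"
  using gen_ideal_mult_left[of _ f A "[:_:]"]
  by (auto simp: kv.subspace_def kscale_def gen_ideal_zero gen_ideal_add)

lemma homogeneous_gen_ideal_low_degrees:
  assumes "finite A" and forms: "\<And>i. i \<in> A \<Longrightarrow> homogeneous (f i) (d i)"
    and "p \<in> gen_ideal f A" "homogeneous p k"
  shows "p \<in> gen_ideal f {i \<in> A. d i \<le> k}"
proof -
  obtain g where g: "p = (\<Sum>i\<in>A. g i * f i)" using assms(3) unfolding gen_ideal_def by blast
  have "p = hom_part k p" using assms(4) by (simp add: homogeneous_iff_hom_part)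
  also have "\<dots> = (\<Sum>i\<in>A. hom_part k (g i * f i))" by (simp add: g hom_part_sum)
  also have "\<dots> = (\<Sum>i\<in>A. if d i \<le> k then hom_part (k - d i) (g i) * f i else 0)"
    by (intro sum.cong refl) (simp add: hom_part_mult_homogeneous forms)
  also have "\<dots> = (\<Sum>i\<in>{i \<in> A. d i \<le> k}. hom_part (k - d i) (g i) * f i)"
    by (simp add: sum.inter_filter \<open>finite A\<close>)
  finally show ?thesis by (rule gen_ideal_memI)
qed

lemma homogeneous_in_span_monomials:
  assumes "homogeneous (p :: 'a::field poly poly) n"
  shows "p \<in> kv.span ((\<lambda>a. monom (monom 1 (n - a)) a) ` {..n})"
proof -
  have "p = hom_part n p" using assms by (simp add: homogeneous_iff_hom_part)
  also have "\<dots> = (\<Sum>a\<le>n. kscale (coeff (coeff p a) (n - a)) (monom (monom 1 (n - a)) a))"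
    unfolding hom_part_def kscale_def by (intro sum.cong refl) (simp add: smult_monom)
  finally show ?thesis
    by (metis (no_types, lifting) image_eqI kv.span_base kv.span_scale kv.span_sum)
qed

lemma dim_degree_part_le: "kv.dim (degree_part (I :: 'a::field poly poly set) n) \<le> n + 1"
proof -
  have "kv.dim (degree_part I n) \<le> card ((\<lambda>a. monom (monom (1::'a) (n - a)) a) ` {..n})"
    by (rule kv.dim_le_card) (use homogeneous_in_span_monomials in auto)
  also have "\<dots> \<le> n + 1" using card_image_le[of "{..n}"] by simp
  finally show ?thesis .
qed

lemma card_le_dim_degree_part:
  fixes C :: "'a::field poly poly set"
  assumes "C \<subseteq> degree_part I n" "kv.independent C"
  shows "card C \<le> kv.dim (degree_part I n)"
proof -
  obtain B where B: "B \<subseteq> degree_part I n" "kv.independent B"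
    "degree_part I n \<subseteq> kv.span B" "card B = kv.dim (degree_part I n)"
    by (rule kv.basis_exists)
  have "finite B"
    using kv.independent_span_bound[OF finite_imageI[of "{..n}"] B(2)] B(1)
      homogeneous_in_span_monomials by blast
  moreover have "C \<subseteq> kv.span B" using assms(1) B(3) by auto
  ultimately show ?thesis using kv.independent_span_bound[OF _ assms(2)] B(4) by force
qed

definition var_x :: "'a::comm_ring_1 poly poly" where "var_x = [:0, 1:]"

definition var_y :: "'a::comm_ring_1 poly poly" where "var_y = [:[:0, 1:]:]"

lemma var_x_mult: "var_x * p = pCons 0 p"
  by (simp add: var_x_def)

lemma var_y_mult: "var_y * p = smult [:0, 1:] p"
  by (simp add: var_y_def)

lemma homogeneous_var_x: "homogeneous (var_x :: 'a::comm_ring_1 poly poly) 1"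
  by (auto simp: homogeneous_def var_x_def coeff_pCons split: nat.splits)

lemma homogeneous_var_y: "homogeneous (var_y :: 'a::comm_ring_1 poly poly) 1"
  by (auto simp: homogeneous_def var_y_def coeff_pCons split: nat.splits)

lemma independent_var_x_image:
  assumes "kv.independent (B :: 'a::field poly poly set)"
  shows "kv.independent ((*) var_x ` B)"
proof (rule kv_pair.linear_independent_injective_image[OF _ assms])
  show "Vector_Spaces.linear kscale kscale ((*) (var_x :: 'a poly poly))"
    unfolding Vector_Spaces.linear_iff using kscale_vector_space
    by (auto simp: kscale_def var_x_mult)
  show "inj_on ((*) var_x) (kv.span B)"
    by (auto simp: inj_on_def var_x_mult)
qed

lemma var_y_mult_not_in_span_var_x_image:
  fixes B :: "'a::field poly poly set"
  assumes "kv.independent B" "B \<noteq> {}"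
  obtains v where "v \<in> B" "var_y * v \<notin> kv.span ((*) var_x ` B)"
proof -
  obtain b where "b \<in> B" using assms(2) by blast
  moreover have "b \<noteq> 0" using \<open>b \<in> B\<close> assms(1) kv.dependent_zero by blast
  ultimately have ex: "\<exists>a. \<exists>b\<in>B. coeff b a \<noteq> 0" using leading_coeff_neq_0 by blast
  define a0 where "a0 = (LEAST a. \<exists>b\<in>B. coeff b a \<noteq> 0)"
  obtain v where v: "v \<in> B" "coeff v a0 \<noteq> 0"
    using LeastI_ex[OF ex] unfolding a0_def by blast
  have lower: "coeff b a = 0" if "b \<in> B" "a < a0" for b a
    using not_less_Least[of a "\<lambda>a. \<exists>b\<in>B. coeff b a \<noteq> 0"] that unfolding a0_def by blast
  have "(*) var_x ` B \<subseteq> {q. coeff q a0 = 0}"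
    using lower by (auto simp: var_x_mult coeff_pCons split: nat.splits)
  moreover have "kv.subspace {q. coeff q a0 = 0}"
    unfolding kv.subspace_def kscale_def by auto
  ultimately have "kv.span ((*) var_x ` B) \<subseteq> {q. coeff q a0 = 0}"
    by (rule kv.span_minimal)
  moreover have "coeff (var_y * v) a0 \<noteq> 0" using v by (simp add: var_y_mult)
  ultimately show ?thesis using that v by blast
qed

lemma independent_Un_minimal_generators:
  fixes f :: "nat \<Rightarrow> 'a::field poly poly"
  assumes "finite A" "J \<subseteq> A" "kv.independent S" "finite S"
    and S_sub: "\<And>j. j \<in> J \<Longrightarrow> S \<subseteq> gen_ideal f (A - {j})"
    and minimal: "\<And>j. j \<in> J \<Longrightarrow> f j \<notin> gen_ideal f (A - {j})"
  shows "kv.independent (S \<union> f ` J) \<and> card (S \<union> f ` J) = card S + card J"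
  using finite_subset[OF assms(2,1)] assms(2) S_sub minimal
proof (induction J rule: finite_induct)
  case empty
  then show ?case using assms(3) by simp
next
  case (insert j J)
  note J_sub = insert.prems(1) and S_sub = insert.prems(2) and minimal = insert.prems(3)
  have "f ` J \<subseteq> gen_ideal f (A - {j})"
    using J_sub insert.hyps(2) \<open>finite A\<close> by (auto intro!: gen_ideal_generator)
  with S_sub[of j] have "kv.span (S \<union> f ` J) \<subseteq> gen_ideal f (A - {j})"
    by (intro kv.span_minimal[OF _ gen_ideal_subspace]) auto
  then have new: "f j \<notin> kv.span (S \<union> f ` J)" using minimal[of j] by blast
  have IH: "kv.independent (S \<union> f ` J) \<and> card (S \<union> f ` J) = card S + card J"
    using J_sub S_sub minimal by (intro insert.IH) auto
  have old: "f j \<notin> S \<union> f ` J" using new kv.span_base[of "f j" "S \<union> f ` J"] by blast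
  have "S \<union> f ` insert j J = insert (f j) (S \<union> f ` J)" by auto
  moreover have "card (insert (f j) (S \<union> f ` J)) = Suc (card (S \<union> f ` J))"
    using old \<open>finite S\<close> insert.hyps(1) by simp
  moreover have "card (insert j J) = Suc (card J)" using insert.hyps by simp
  ultimately show ?case using kv.independent_insertI[OF new] IH by simp
qed

lemma independent_var_xy_extension:
  fixes B :: "'a::field poly poly set"
  assumes "finite B" "kv.independent B" "B \<noteq> {}"
  obtains S where "finite S" "kv.independent S" "card S = Suc (card B)"
    "S \<subseteq> (*) var_x ` B \<union> (*) var_y ` B"
proof -
  obtain v where v: "v \<in> B" "var_y * v \<notin> kv.span ((*) var_x ` B)"
    using var_y_mult_not_in_span_var_x_image[OF assms(2,3)] by blast
  let ?S = "insert (var_y * v) ((*) var_x ` B)"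
  have "kv.independent ?S"
    using kv.independent_insertI[OF v(2) independent_var_x_image[OF assms(2)]] .
  moreover have "var_y * v \<notin> (*) var_x ` B"
    using v(2) kv.span_base[of "var_y * v" "(*) var_x ` B"] by blast
  then have "card ?S = Suc (card B)"
    using assms(1) by (simp add: card_image inj_on_def var_x_mult)
  moreover have "?S \<subseteq> (*) var_x ` B \<union> (*) var_y ` B" using v(1) by blast
  ultimately show ?thesis using that[of ?S] assms(1) by simp
qed

lemma var_mult_degree_part:
  assumes "p \<in> degree_part (gen_ideal f A) n" "q \<in> {var_x, var_y}"
  shows "q * p \<in> degree_part (gen_ideal f A) (Suc n)"
  using assms homogeneous_mult[of q 1 p n] homogeneous_var_x homogeneous_var_y
  by (auto intro: gen_ideal_mult_left)

context
  fixes f :: "nat \<Rightarrow> 'a::field poly poly" and d :: "nat \<Rightarrow> nat" and r D :: nat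
  assumes forms: "\<And>i. i < r \<Longrightarrow> homogeneous (f i) (d i)"
    and minimal: "\<And>j. j < r \<Longrightarrow> f j \<notin> gen_ideal f ({..<r} - {j})"
    and min_degree: "\<And>j. j < r \<Longrightarrow> D \<le> d j"
    and min_degree_attained: "\<exists>j<r. d j = D"
begin

lemma independent_generators_of_degree:
  assumes "finite S" "kv.independent S"
    and S_sub: "\<And>j. j < r \<Longrightarrow> d j = m \<Longrightarrow> S \<subseteq> gen_ideal f ({..<r} - {j})"
  shows "kv.independent (S \<union> f ` {j. j < r \<and> d j = m})"
    "card (S \<union> f ` {j. j < r \<and> d j = m}) = card S + card {j. j < r \<and> d j = m}"
    "f ` {j. j < r \<and> d j = m} \<subseteq> degree_part (gen_ideal f {..<r}) m"
  using independent_Un_minimal_generators[of "{..<r}" "{j. j < r \<and> d j = m}" S f]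
    assms minimal forms by (auto intro: gen_ideal_generator)

lemma degree_part_subset_gen_ideal_Diff:
  assumes "B \<subseteq> degree_part (gen_ideal f {..<r}) n" "j < r" "n < d j"
  shows "B \<subseteq> gen_ideal f ({..<r} - {j})"
proof
  fix b assume "b \<in> B"
  with assms(1) have "b \<in> gen_ideal f {i \<in> {..<r}. d i \<le> n}"
    by (intro homogeneous_gen_ideal_low_degrees[of "{..<r}" f d]) (auto intro: forms)
  also have "\<dots> \<subseteq> gen_ideal f ({..<r} - {j})" using assms(2,3) by (intro gen_ideal_mono) auto
  finally show "b \<in> gen_ideal f ({..<r} - {j})" .
qed

lemma exists_large_independent_degree_part:
  assumes "D \<le> n"
  shows "\<exists>B. finite B \<and> kv.independent B \<and> B \<noteq> {} \<and> B \<subseteq> degree_part (gen_ideal f {..<r}) n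
    \<and> n - D + card {j. j < r \<and> d j \<le> n} \<le> card B"
  using assms
proof (induction n rule: dec_induct)
  case base
  let ?G = "{j. j < r \<and> d j = D}"
  note T = independent_generators_of_degree[of "{}" D, OF finite.emptyI kv.independent_empty
      empty_subsetI]
  have "{j. j < r \<and> d j \<le> D} = ?G" using min_degree by (auto intro: antisym)
  moreover have "f ` ?G \<noteq> {}" using min_degree_attained by blast
  ultimately show ?case using T by (intro exI[of _ "f ` ?G"]) simp
next
  case (step n)
  then obtain B where B: "finite B" "kv.independent B" "B \<noteq> {}"
    "B \<subseteq> degree_part (gen_ideal f {..<r}) n" "n - D + card {j. j < r \<and> d j \<le> n} \<le> card B"
    by blast
  obtain S where S: "finite S" "kv.independent S" "card S = Suc (card B)"
    "S \<subseteq> (*) var_x ` B \<union> (*) var_y ` B"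
    using independent_var_xy_extension[OF B(1-3)] .
  let ?G = "{j. j < r \<and> d j = Suc n}"
  have S_deg: "S \<subseteq> degree_part (gen_ideal f {..<r}) (Suc n)"
  proof
    fix s assume "s \<in> S"
    then obtain q b where "b \<in> B" "q \<in> {var_x, var_y}" "s = q * b" using S(4) by blast
    then show "s \<in> degree_part (gen_ideal f {..<r}) (Suc n)"
      using B(4) var_mult_degree_part by blast
  qed
  have "S \<subseteq> gen_ideal f ({..<r} - {j})" if "j < r" "d j = Suc n" for j
    using degree_part_subset_gen_ideal_Diff[OF B(4) that(1)] that(2) S(4)
    by (auto intro: gen_ideal_mult_left)
  note T = independent_generators_of_degree[OF S(1,2) this]
  have "{j. j < r \<and> d j \<le> Suc n} = {j. j < r \<and> d j \<le> n} \<union> ?G" by auto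
  then have "card {j. j < r \<and> d j \<le> Suc n} = card {j. j < r \<and> d j \<le> n} + card ?G"
    by (simp add: card_Un_disjoint disjoint_iff)
  then have "Suc n - D + card {j. j < r \<and> d j \<le> Suc n} \<le> card (S \<union> f ` ?G)"
    using T(2) S(3) B(5) step.hyps by simp
  moreover have "S \<union> f ` ?G \<subseteq> degree_part (gen_ideal f {..<r}) (Suc n)"
    using S_deg T(3) by (rule Un_least)
  moreover have "finite (S \<union> f ` ?G)" "S \<union> f ` ?G \<noteq> {}" using S(1,3) by auto
  ultimately show ?case using T(1) by blast
qed

lemma dim_degree_part_lower_bound:
  assumes "D \<le> n"
  shows "n - D + card {j. j < r \<and> d j \<le> n} \<le> kv.dim (degree_part (gen_ideal f {..<r}) n)"
proof -
  obtain B where B: "kv.independent B" "B \<subseteq> degree_part (gen_ideal f {..<r}) n"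
    "n - D + card {j. j < r \<and> d j \<le> n} \<le> card B"
    using exists_large_independent_degree_part[OF assms] by blast
  show ?thesis using B(3) card_le_dim_degree_part[OF B(2,1)] by (rule le_trans)
qed

end

lemma quot_hilb_series_nth:
  "fps_nth (quot_hilb_series I) n = of_nat (n + 1) - of_nat (kv.dim (degree_part I n))"
  using dim_degree_part_le[of I n]
  by (simp add: quot_hilb_series_def quot_hilb_fun_def of_nat_diff)

lemma fps_nth_divide_one_minus_X:
  fixes F :: "'a::field fps"
  shows "fps_nth (F / (1 - fps_X)) n = (\<Sum>i\<le>n. fps_nth F i)"
proof -
  have "inverse (1 - fps_X :: 'a fps) = Abs_fps (\<lambda>_. 1)"
    by (metis fps_inverse_gp' fps_inverse_idempotent fps_one_nth one_neq_zero fps_nth_Abs_fps)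
  then have "F / (1 - fps_X) = F * Abs_fps (\<lambda>_. 1)" by (simp add: fps_divide_unit)
  then show ?thesis by (simp add: fps_mult_nth atLeast0AtMost)
qed

lemma sum_fps_nth_sum_X_power:
  assumes "finite J"
  shows "(\<Sum>i\<le>n. fps_nth (\<Sum>j\<in>J. fps_X ^ e j) i)
    = (of_nat (card {j \<in> J. e j \<le> n}) :: 'a::comm_ring_1)"
proof -
  have "(\<Sum>i\<le>n. fps_nth (\<Sum>j\<in>J. fps_X ^ e j :: 'a fps) i)
      = (\<Sum>j\<in>J. \<Sum>i\<le>n. if i = e j then 1 else 0)"
    by (simp add: fps_sum_nth sum.swap[of _ J])
  also have "\<dots> = (\<Sum>j\<in>J. if e j \<le> n then 1 else 0)" by (simp add: sum.delta')
  also have "\<dots> = of_nat (card {j \<in> J. e j \<le> n})"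
    using assms by (simp add: sum.inter_filter[symmetric])
  finally show ?thesis .
qed

theorem mainTheorem1:
  fixes f :: "nat \<Rightarrow> 'a::field poly poly" and d :: "nat \<Rightarrow> nat" and r :: nat
  assumes r_pos: "r \<ge> 1"
    and forms: "\<And>i. i < r \<Longrightarrow> homogeneous (f i) (d i)"
    and deg_order: "\<And>i j. i \<le> j \<Longrightarrow> j < r \<Longrightarrow> d j \<le> d i"
    and minimal: "\<And>j. j < r \<Longrightarrow> f j \<notin> gen_ideal f ({..<r} - {j})"
  shows "\<forall>n. fps_nth (quot_hilb_series (gen_ideal f {..<r})) n
           \<le> fps_nth (((\<Sum>m<d (r - 1). fps_X ^ m) - (\<Sum>j<r - 1. fps_X ^ d j))
                      / (1 - fps_X)) n"
proof
  fix n
  let ?D = "d (r - 1)" and ?dim = "kv.dim (degree_part (gen_ideal f {..<r}) n)"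
    and ?c = "card {j. j < r - 1 \<and> d j \<le> n}"
  have min_degree: "\<And>j. j < r \<Longrightarrow> ?D \<le> d j" using deg_order r_pos by simp
  have min_degree_attained: "\<exists>j<r. d j = ?D" using r_pos by (intro exI[of _ "r - 1"]) simp
  have rhs: "fps_nth (((\<Sum>m<?D. fps_X ^ m) - (\<Sum>j<r - 1. fps_X ^ d j)) / (1 - fps_X)) n
      = of_nat (card {m \<in> {..<?D}. m \<le> n}) - (of_nat ?c :: rat)"
    using sum_fps_nth_sum_X_power[where 'a = rat and J = "{..<?D}" and e = "\<lambda>m. m"]
      sum_fps_nth_sum_X_power[where 'a = rat and J = "{..<r - 1}" and e = d]
    by (simp add: fps_nth_divide_one_minus_X sum_subtractf)
  have "of_nat (n + 1) - of_nat ?dim \<le> of_nat (card {m \<in> {..<?D}. m \<le> n}) - (of_nat ?c :: rat)"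
  proof (cases "n < ?D")
    case True
    then have "\<not> d j \<le> n" if "j < r - 1" for j using min_degree[of j] that by linarith
    then have c: "?c = 0" by auto
    have "{m \<in> {..<?D}. m \<le> n} = {..n}" using True by auto
    then show ?thesis unfolding c by simp
  next
    case False
    have "{j. j < r \<and> d j \<le> n} = insert (r - 1) {j. j < r - 1 \<and> d j \<le> n}"
      using False r_pos by auto
    then have "n - ?D + Suc ?c \<le> ?dim"
      using dim_degree_part_lower_bound[OF forms minimal min_degree min_degree_attained, of n] False
      by simp
    then have "(of_nat (n - ?D + Suc ?c) :: rat) \<le> of_nat ?dim" by (simp only: of_nat_le_iff)
    moreover have "{m \<in> {..<?D}. m \<le> n} = {..<?D}" using False by auto
    ultimately show ?thesis using False by (simp add: of_nat_diff)
  qed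
  then show "fps_nth (quot_hilb_series (gen_ideal f {..<r})) n
      \<le> fps_nth (((\<Sum>m<?D. fps_X ^ m) - (\<Sum>j<r - 1. fps_X ^ d j)) / (1 - fps_X)) n"
    by (simp only: rhs quot_hilb_series_nth)
qed

end
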